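(* Let $M\ge2$, $u:\{0,1\}^M\to\mathbb R$, let $h$ be the solution of the Dirichlet problem on ${\mathbb T}^{(M)}$ with boundary data $u$, and let $a$, $\Sigma$ be as follows: $a(z^{(n)})=h(z^{(n)})-h(z^{(n-1)})$ and $\Sigma(z^{(n)})=\sum_{y\in\{0,1\}^{M-n}}u(z^{(n)}y)$. Set $b_n=(2^{M-n+1}-1)^{-1}$ for $1\le n\le M$. Then for all $z\in\{0,1\}^M$ and $1\le n\le M-1$, $$h(z^{(n)})=b_n\Sigma(z^{(n)})+\sum_{\ell=1}^{n-1}\frac{b_{n-\ell+1}\,b_{n-\ell}}{b_{n+1}}\,\Sigma(z^{(n-\ell)})$$ and $$a(z^{(n)})=b_n\Sigma(z^{(n)})+\sum_{\ell=1}^{n-1}b_{n-\ell}\,\Sigma(z^{(n-\ell)})\left(\frac{b_{n-\ell+1}}{b_{n+1}}-\frac{b_{n-\ell+1}}{b_n}\right).$$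
   Context: Binary tree: for $n\ge0$, $\{0,1\}^n$ is the set of vertices of generation $n$ (words $z=z_1\cdots z_n$; generation $0$ is the root $\emptyset$). For a vertex $z$ of generation $n$, its children are $z0,z1$, and for $0\le m\le n$, $z^{(m)}=z_1\cdots z_m$ is its ancestor in generation $m$; $zy$ denotes concatenation of words. ${\mathbb T}^{(M)}$ is the tree of generations $0,\dots,M$. Dirichlet problem: given $M\ge1$ and $u:\{0,1\}^M\to\mathbb R$, its solution is the unique $h$ on the vertices of ${\mathbb T}^{(M)}$ with $h(\emptyset)=0$, $h(z)=u(z)$ for $z\in\{0,1\}^M$, and $h(z0)+h(z1)+h(z^{(n-1)})=3h(z)$ for all $z\in\{0,1\}^n$, $1\le n<M$. *)

theory Defs
  imports Main "HOL.Real"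
begin

text \<open>Vertices of the binary tree are words over {0,1}, represented as bool lists
  (False = 0, True = 1). Generation n = words of length n. The ancestor z^(m) is
  take m z, concatenation zy is z @ y, children of z are z @ [False], z @ [True].\<close>

definition is_dirichlet_solution :: "nat \<Rightarrow> (bool list \<Rightarrow> real) \<Rightarrow> (bool list \<Rightarrow> real) \<Rightarrow> bool" where
  "is_dirichlet_solution M u h \<longleftrightarrow>
     h [] = 0 \<and>
     (\<forall>z. length z = M \<longrightarrow> h z = u z) \<and>
     (\<forall>z. 1 \<le> length z \<and> length z < M \<longrightarrow>
        h (z @ [False]) + h (z @ [True]) + h (take (length z - 1) z) = 3 * h z)"

definition tree_Sigma :: "nat \<Rightarrow> (bool list \<Rightarrow> real) \<Rightarrow> bool list \<Rightarrow> real" where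
  "tree_Sigma M u w = (\<Sum>y\<in>{y::bool list. length y = M - length w}. u (w @ y))"

definition tree_a :: "(bool list \<Rightarrow> real) \<Rightarrow> bool list \<Rightarrow> real" where
  "tree_a h w = h w - h (take (length w - 1) w)"

definition tree_b :: "nat \<Rightarrow> nat \<Rightarrow> real" where
  "tree_b M n = 1 / (2 ^ (M - n + 1) - 1)"

end

theory Submission
  imports Defs
begin

text \<open>Summing the harmonicity relation over a subtree shows that the sum of \<open>h\<close> over the
  \<open>2^k\<close> descendants of a vertex \<open>w\<close> is \<open>2^k h(w) + (2^k - 1) a(w)\<close>. On the boundary this gives
  \<open>\<Sigma>(w) = (2c - 1) h(w) - (c - 1) h(parent w)\<close> with \<open>c = 2^(M - |w|)\<close>. Since \<open>b(|w|) = 1/(2c - 1)\<close>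
  and \<open>b(|w| + 1) = 1/(c - 1)\<close>, dividing by \<open>(2c - 1)(c - 1)\<close> turns this into
  \<open>b(j+1) h(z\<^sup>(\<^sup>j\<^sup>)) = b(j) h(z\<^sup>(\<^sup>j\<^sup>-\<^sup>1\<^sup>)) + b(j+1) b(j) \<Sigma>(z\<^sup>(\<^sup>j\<^sup>))\<close>, which telescopes from \<open>h(\<emptyset>) = 0\<close>.
  Both formulas are read off from the telescoped sums up to \<open>n\<close> and \<open>n - 1\<close>.\<close>

lemma sum_lists_length_Suc:
  "(\<Sum>y\<in>{y::bool list. length y = Suc k}. f y) =
   (\<Sum>y\<in>{y. length y = k}. f (False # y) + f (True # y))"
proof -
  let ?A = "{y::bool list. length y = k}"
  have lists_Suc: "{y::bool list. length y = Suc k} = (\<lambda>(b, y). b # y) ` (UNIV \<times> ?A)"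
    by (auto simp: length_Suc_conv)
  have "inj_on (\<lambda>(b, y). b # y) (UNIV \<times> ?A)"
    by (auto simp: inj_on_def)
  then have "(\<Sum>y\<in>{y::bool list. length y = Suc k}. f y) = (\<Sum>b\<in>UNIV. \<Sum>y\<in>?A. f (b # y))"
    unfolding lists_Suc by (simp add: sum.reindex sum.cartesian_product split_def)
  then show ?thesis
    by (simp add: UNIV_bool sum.distrib)
qed

lemma sum_atLeastAtMost_reflect:
  fixes n :: nat
  shows "(\<Sum>i = 1..n - 1. f i) = (\<Sum>l = 1..n - 1. f (n - l))"
proof (cases n)
  case (Suc m)
  then show ?thesis
    using sum.atLeastAtMost_rev[of f 1 m] by simp
qed simp

lemma tree_b_pos: "j \<le> M \<Longrightarrow> tree_b M j > 0"
proof -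
  have "(1::real) \<le> 2 ^ (M - j)" by simp
  then have "(1::real) < 2 * 2 ^ (M - j)" by linarith
  then show ?thesis unfolding tree_b_def by simp
qed

lemma dirichlet_subtree_sum:
  assumes sol: "is_dirichlet_solution M u h"
    and "1 \<le> length w" "length w + k \<le> M"
  shows "(\<Sum>y\<in>{y::bool list. length y = k}. h (w @ y)) = 2 ^ k * h w + (2 ^ k - 1) * tree_a h w"
  using assms(2,3)
proof (induction k arbitrary: w)
  case 0
  have "{y::bool list. length y = 0} = {[]}" by auto
  then show ?case by simp
next
  case (Suc k)
  have harmonic: "h (w @ [False]) + h (w @ [True]) + h (take (length w - 1) w) = 3 * h w"
    using sol Suc.prems unfolding is_dirichlet_solution_def by auto
  have "(\<Sum>y\<in>{y::bool list. length y = Suc k}. h (w @ y)) =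
     (\<Sum>y\<in>{y::bool list. length y = k}. h ((w @ [False]) @ y)) +
     (\<Sum>y\<in>{y::bool list. length y = k}. h ((w @ [True]) @ y))"
    by (simp add: sum_lists_length_Suc sum.distrib)
  also have "\<dots> = 2 ^ k * h (w @ [False]) + (2 ^ k - 1) * (h (w @ [False]) - h w)
     + (2 ^ k * h (w @ [True]) + (2 ^ k - 1) * (h (w @ [True]) - h w))"
    using Suc.IH[of "w @ [False]"] Suc.IH[of "w @ [True]"] Suc.prems
    by (simp add: tree_a_def)
  also have "\<dots> = 2 ^ Suc k * h w + (2 ^ Suc k - 1) * tree_a h w"
  proof -
    have h_True: "h (w @ [True]) = 3 * h w - h (take (length w - 1) w) - h (w @ [False])"
      using harmonic by linarith
    show ?thesis unfolding h_True by (simp add: tree_a_def algebra_simps)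
  qed
  finally show ?case .
qed

lemma tree_Sigma_dirichlet:
  assumes sol: "is_dirichlet_solution M u h"
    and "1 \<le> length w" "length w \<le> M"
  shows "tree_Sigma M u w = 2 ^ (M - length w) * h w + (2 ^ (M - length w) - 1) * tree_a h w"
proof -
  have "tree_Sigma M u w = (\<Sum>y\<in>{y::bool list. length y = M - length w}. h (w @ y))"
    unfolding tree_Sigma_def
    using sol assms(3) by (intro sum.cong) (auto simp: is_dirichlet_solution_def)
  also have "\<dots> = 2 ^ (M - length w) * h w + (2 ^ (M - length w) - 1) * tree_a h w"
    using dirichlet_subtree_sum[OF sol] assms by simp
  finally show ?thesis .
qed

lemma dirichlet_weighted_step:
  assumes sol: "is_dirichlet_solution M u h"
    and w: "1 \<le> length w" "length w < M"
  shows "h w * tree_b M (length w + 1) =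
    h (take (length w - 1) w) * tree_b M (length w)
    + tree_b M (length w + 1) * tree_b M (length w) * tree_Sigma M u w"
proof -
  define c :: real where "c = 2 ^ (M - length w)"
  have "(2::real) ^ 1 \<le> 2 ^ (M - length w)"
    using w by (intro power_increasing) auto
  then have c2: "c \<ge> 2" unfolding c_def by simp
  have b_j: "tree_b M (length w) = 1 / (2 * c - 1)"
    using w by (simp add: tree_b_def c_def Suc_diff_le)
  have b_Suc_j: "tree_b M (length w + 1) = 1 / (c - 1)"
    using w by (simp add: tree_b_def c_def Suc_diff_Suc)
  have Sigma_w: "tree_Sigma M u w = (2 * c - 1) * h w - (c - 1) * h (take (length w - 1) w)"
    using tree_Sigma_dirichlet[OF sol] w
    by (simp add: c_def tree_a_def algebra_simps)
  define x y where "x = 1 / (c - 1)" and "y = 1 / (2 * c - 1)"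
  have inv: "x * (c - 1) = 1" "y * (2 * c - 1) = 1"
    using c2 by (auto simp: x_def y_def)
  have "x * y * tree_Sigma M u w
      = h w * x * (y * (2 * c - 1)) - h (take (length w - 1) w) * y * (x * (c - 1))"
    unfolding Sigma_w by (simp add: algebra_simps)
  then show ?thesis
    unfolding b_j b_Suc_j x_def[symmetric] y_def[symmetric] inv by simp
qed

lemma dirichlet_weighted_telescope:
  assumes sol: "is_dirichlet_solution M u h"
    and "length z = M" "j < M"
  shows "h (take j z) * tree_b M (j + 1) =
    (\<Sum>i = 1..j. tree_b M (i + 1) * tree_b M i * tree_Sigma M u (take i z))"
  using assms(3)
proof (induction j)
  case 0
  then show ?case using sol by (simp add: is_dirichlet_solution_def)
next
  case (Suc j)
  then show ?case
    using dirichlet_weighted_step[OF sol, of "take (Suc j) z"] assms(2) by simp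
qed

theorem lemma2p2:
  fixes M :: nat and u h :: "bool list \<Rightarrow> real"
  assumes "M \<ge> 2"
    and "is_dirichlet_solution M u h"
  shows "\<forall>z n. length z = M \<and> 1 \<le> n \<and> n \<le> M - 1 \<longrightarrow>
     h (take n z) = tree_b M n * tree_Sigma M u (take n z)
        + (\<Sum>l = 1..n-1. tree_b M (n - l + 1) * tree_b M (n - l) / tree_b M (n + 1)
                          * tree_Sigma M u (take (n - l) z))
   \<and> tree_a h (take n z) = tree_b M n * tree_Sigma M u (take n z)
        + (\<Sum>l = 1..n-1. tree_b M (n - l) * tree_Sigma M u (take (n - l) z)
             * (tree_b M (n - l + 1) / tree_b M (n + 1) - tree_b M (n - l + 1) / tree_b M n))"
proof (intro allI impI)
  fix z :: "bool list" and n :: nat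
  assume zn: "length z = M \<and> 1 \<le> n \<and> n \<le> M - 1"
  then obtain m where n: "n = Suc m" and n_less: "n < M" by (cases n) auto
  let ?b = "tree_b M" and ?\<Sigma> = "\<lambda>j. tree_Sigma M u (take j z)"
  define T where "T = (\<Sum>i = 1..n - 1. ?b (i + 1) * ?b i * ?\<Sigma> i)"
  have T_reflected: "T = (\<Sum>l = 1..n - 1. ?b (n - l + 1) * ?b (n - l) * ?\<Sigma> (n - l))"
    unfolding T_def by (subst sum_atLeastAtMost_reflect) simp
  have b_pos: "?b n > 0" "?b (n + 1) > 0"
    using zn by (auto intro: tree_b_pos)
  have "h (take n z) * ?b (n + 1) = T + ?b (n + 1) * ?b n * ?\<Sigma> n"
    using dirichlet_weighted_telescope[OF assms(2), of z n] zn n_less by (simp add: T_def n)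
  then have h_n: "h (take n z) = ?b n * ?\<Sigma> n + T / ?b (n + 1)"
    using b_pos by (simp add: field_simps)
  have "h (take (n - 1) z) * ?b n = T"
    using dirichlet_weighted_telescope[OF assms(2), of z "n - 1"] zn n_less by (simp add: T_def n)
  then have h_pred: "h (take (n - 1) z) = T / ?b n"
    using b_pos by (simp add: field_simps)
  have "tree_a h (take n z) = ?b n * ?\<Sigma> n + (T / ?b (n + 1) - T / ?b n)"
    using zn n_less h_n h_pred by (simp add: tree_a_def min_def)
  moreover have "T / ?b (n + 1) = (\<Sum>l = 1..n-1. ?b (n - l + 1) * ?b (n - l) / ?b (n + 1) * ?\<Sigma> (n - l))"
    unfolding T_reflected sum_divide_distrib by simp
  moreover have "T / ?b (n + 1) - T / ?b n = (\<Sum>l = 1..n-1. ?b (n - l) * ?\<Sigma> (n - l)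
                   * (?b (n - l + 1) / ?b (n + 1) - ?b (n - l + 1) / ?b n))"
    unfolding T_reflected sum_divide_distrib sum_subtractf[symmetric]
    by (intro sum.cong refl) (simp add: right_diff_distrib mult_ac)
  ultimately show "h (take n z) = ?b n * ?\<Sigma> n
        + (\<Sum>l = 1..n-1. ?b (n - l + 1) * ?b (n - l) / ?b (n + 1) * ?\<Sigma> (n - l))
   \<and> tree_a h (take n z) = ?b n * ?\<Sigma> n
        + (\<Sum>l = 1..n-1. ?b (n - l) * ?\<Sigma> (n - l) * (?b (n - l + 1) / ?b (n + 1) - ?b (n - l + 1) / ?b n))"
    using h_n by simp
qed

end
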